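(* There exist an integer $m\ge 3$, parameters $\beta,\beta',p,p'\in[0,1]$ and $\pi\in(0,1)$ such that the games $G(m,\beta,\beta')$ and $G(m,p,p')$ are both losing games, while their random mixture $G(m,\pi p+(1-\pi)\beta,\ \pi p'+(1-\pi)\beta')$ is a winning game.
   Context: For $m\ge1$ and $a,a'\in[0,1]$, the Parrondo game $G(m,a,a')$ is the Markov chain $\{S_n\}$ on $\mathbb{Z}$ with $S_0=0$, steps $S_{n+1}-S_n\in\{-1,+1\}$, and $P(S_{n+1}-S_n=1\mid S_0,\dots,S_n)=a'\,1_{[S_n\in m\mathbb{Z}]}+a\,1_{[S_n\notin m\mathbb{Z}]}$. A game is called winning, losing, or fair according as the almost sure limit of $S_n/n$ is positive, negative, or zero. The random mixture with mixing probability $\pi$ corresponds to choosing, independently at each play, the first game with probability $\pi$ and the second with probability $1-\pi$. *)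

theory Defs
  imports "HOL-Probability.Probability"
begin

text \<open>Probability space: an i.i.d. sequence of Uniform[0,1] random variables.
  The Parrondo chain is realised on it by stepping +1 iff the n-th uniform
  is below the current success probability, which gives exactly the
  transition law of G(m,a,a').\<close>

definition unif_seq_space :: "(nat \<Rightarrow> real) measure" where
  "unif_seq_space = PiM UNIV (\<lambda>_. uniform_measure lborel {0..1::real})"

definition parrondo_prob :: "nat \<Rightarrow> real \<Rightarrow> real \<Rightarrow> int \<Rightarrow> real" where
  "parrondo_prob m a a' s = (if int m dvd s then a' else a)"

fun parrondo_walk :: "nat \<Rightarrow> real \<Rightarrow> real \<Rightarrow> (nat \<Rightarrow> real) \<Rightarrow> nat \<Rightarrow> int" where
  "parrondo_walk m a a' \<omega> 0 = 0"
| "parrondo_walk m a a' \<omega> (Suc n) =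
     parrondo_walk m a a' \<omega> n +
     (if \<omega> n < parrondo_prob m a a' (parrondo_walk m a a' \<omega> n) then 1 else -1)"

definition winning_game :: "nat \<Rightarrow> real \<Rightarrow> real \<Rightarrow> bool" where
  "winning_game m a a' \<longleftrightarrow>
     (AE \<omega> in unif_seq_space. \<exists>L>0.
        (\<lambda>n. real_of_int (parrondo_walk m a a' \<omega> n) / real n) \<longlonglongrightarrow> L)"

definition losing_game :: "nat \<Rightarrow> real \<Rightarrow> real \<Rightarrow> bool" where
  "losing_game m a a' \<longleftrightarrow>
     (AE \<omega> in unif_seq_space. \<exists>L<0.
        (\<lambda>n. real_of_int (parrondo_walk m a a' \<omega> n) / real n) \<longlonglongrightarrow> L)"

end

theory Submission
  imports Defs
begin

text \<open>Let \<open>h\<close> be a bounded solution of the Poisson equation of the game: from every state \<open>s\<close>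
  the expected increment of \<open>S + h S\<close> equals \<open>\<mu>\<close>. Then \<open>S\<^sub>n + h S\<^sub>n - h 0 - n \<mu>\<close> has bounded
  increments that are orthogonal to every function of the past, so its fourth moment is \<open>O(n\<^sup>2)\<close>;
  Markov's inequality and Borel-Cantelli give \<open>S\<^sub>n / n \<longrightarrow> \<mu>\<close> almost surely. For \<open>m = 3\<close> a
  periodic \<open>h\<close> reduces the Poisson equation to three linear equations in \<open>\<mu>\<close> and the values of
  \<open>h\<close> on the residues.\<close>

lemma four_power_add_le:
  fixes x d :: real
  shows "(x + d) ^ 4 \<le> x ^ 4 + 4 * x ^ 3 * d + 8 * x\<^sup>2 * d\<^sup>2 + 3 * d ^ 4"
proof -
  have "x ^ 4 + 4 * x ^ 3 * d + 8 * x\<^sup>2 * d\<^sup>2 + 3 * d ^ 4 - (x + d) ^ 4 = 2 * (d * (x - d))\<^sup>2"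
    by (simp add: algebra_simps power2_eq_square power4_eq_xxxx power3_eq_cube)
  then show ?thesis
    using zero_le_power2[of "d * (x - d)"] by linarith
qed

lemma (in prob_space) AE_eventually_abs_div_less_of_fourth_moment:
  fixes X :: "nat \<Rightarrow> 'a \<Rightarrow> real"
  assumes [measurable]: "\<And>n. X n \<in> borel_measurable M"
    and integrable: "\<And>n. integrable M (\<lambda>x. X n x ^ 4)"
    and moment: "\<And>n. (\<integral>x. X n x ^ 4 \<partial>M) \<le> K * (real n)\<^sup>2"
    and "0 < \<epsilon>"
  shows "AE x in M. eventually (\<lambda>n. \<bar>X n x / real n\<bar> < \<epsilon>) sequentially"
proof -
  define A where "A n = {x \<in> space M. (\<epsilon> * real n) ^ 4 \<le> X n x ^ 4}" for n
  have [measurable]: "A n \<in> sets M" for n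
    unfolding A_def by measurable
  have measure_A_le: "measure M (A n) \<le> K / \<epsilon> ^ 4 * inverse ((real n)\<^sup>2)" if "n \<ge> 1" for n
  proof -
    have "measure M (A n) \<le> (\<integral>x. X n x ^ 4 \<partial>M) / (\<epsilon> * real n) ^ 4"
      unfolding A_def using \<open>0 < \<epsilon>\<close> that
      by (intro integral_Markov_inequality_measure[where A = "space M"] integrable) auto
    also have "\<dots> \<le> K * (real n)\<^sup>2 / (\<epsilon> * real n) ^ 4"
      by (intro divide_right_mono moment) simp
    also have "\<dots> = K / \<epsilon> ^ 4 * inverse ((real n)\<^sup>2)"
      using \<open>0 < \<epsilon>\<close> that by (simp add: field_simps power2_eq_square power4_eq_xxxx)
    finally show ?thesis .
  qed
  have "summable (\<lambda>n. K / \<epsilon> ^ 4 * inverse ((real n)\<^sup>2))"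
    by (intro summable_mult inverse_power_summable) simp
  then have "summable (\<lambda>n. measure M (A n))"
    by (rule summable_comparison_test'[where N = 1]) (use measure_A_le in simp)
  then have "AE x in M. eventually (\<lambda>n. x \<in> space M - A n) sequentially"
    by (intro borel_cantelli_AE1) (simp_all add: less_top[symmetric])
  then show ?thesis
  proof (rule AE_mp, intro AE_I2 impI)
    fix x
    assume "eventually (\<lambda>n. x \<in> space M - A n) sequentially" and "x \<in> space M"
    then show "eventually (\<lambda>n. \<bar>X n x / real n\<bar> < \<epsilon>) sequentially"
    proof (elim eventually_mono)
      fix n
      assume "x \<in> space M - A n"
      then have "\<bar>X n x\<bar> ^ 4 < (\<epsilon> * real n) ^ 4"
        using \<open>x \<in> space M\<close> by (simp add: A_def power_even_abs not_le)
      then have "\<bar>X n x\<bar> < \<epsilon> * real n"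
        by (rule power_less_imp_less_base) (use \<open>0 < \<epsilon>\<close> in simp)
      then show "\<bar>X n x / real n\<bar> < \<epsilon>"
      proof (cases "n = 0")
        case False
        then show ?thesis
          using \<open>\<bar>X n x\<bar> < \<epsilon> * real n\<close> by (simp add: pos_divide_less_eq)
      qed (use \<open>0 < \<epsilon>\<close> in simp)
    qed
  qed
qed

lemma (in prob_space) AE_LIMSEQ_div_zero_of_fourth_moment:
  fixes X :: "nat \<Rightarrow> 'a \<Rightarrow> real"
  assumes "\<And>n. X n \<in> borel_measurable M"
    and "\<And>n. integrable M (\<lambda>x. X n x ^ 4)"
    and "\<And>n. (\<integral>x. X n x ^ 4 \<partial>M) \<le> K * (real n)\<^sup>2"
  shows "AE x in M. (\<lambda>n. X n x / real n) \<longlonglongrightarrow> 0"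
proof -
  have "AE x in M. \<forall>j::nat. eventually (\<lambda>n. \<bar>X n x / real n\<bar> < inverse (Suc j)) sequentially"
    unfolding AE_all_countable
    by (intro allI AE_eventually_abs_div_less_of_fourth_moment[where K = K] assms) simp
  then show ?thesis
  proof (elim AE_mp, intro AE_I2 impI)
    fix x
    assume small: "\<forall>j::nat. eventually (\<lambda>n. \<bar>X n x / real n\<bar> < inverse (Suc j)) sequentially"
    show "(\<lambda>n. X n x / real n) \<longlonglongrightarrow> 0"
    proof (rule tendstoI)
      fix r :: real
      assume "0 < r"
      then obtain j where j: "inverse (Suc j) < r"
        using reals_Archimedean by blast
      from small have "eventually (\<lambda>n. \<bar>X n x / real n\<bar> < inverse (Suc j)) sequentially"
        by blast
      then show "eventually (\<lambda>n. dist (X n x / real n) 0 < r) sequentially"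
        by (rule eventually_mono) (use j in auto)
    qed
  qed
qed

lemma abs_le_of_bounded_increments:
  fixes f :: "nat \<Rightarrow> real"
  assumes "f 0 = 0" and "\<And>n. \<bar>f (Suc n) - f n\<bar> \<le> C"
  shows "\<bar>f n\<bar> \<le> C * real n"
proof (induction n)
  case (Suc n)
  then show ?case
    using assms(2)[of n] by (simp add: algebra_simps)
qed (simp add: assms(1))

locale bounded_orthogonal_increments = prob_space P for P :: "'a measure" +
  fixes X :: "nat \<Rightarrow> 'a \<Rightarrow> real" and C :: real
  assumes X_0: "\<And>x. X 0 x = 0"
    and X_measurable [measurable]: "\<And>n. X n \<in> borel_measurable P"
    and increment_bounded: "\<And>n x. \<bar>X (Suc n) x - X n x\<bar> \<le> C"
    and increment_orthogonal: "\<And>n k. (\<integral>x. X n x ^ k * (X (Suc n) x - X n x) \<partial>P) = 0"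
begin

lemma C_nonneg: "0 \<le> C"
  using abs_ge_zero increment_bounded order.trans by blast

lemma increment_square_le: "(X (Suc n) x - X n x)\<^sup>2 \<le> C\<^sup>2"
  by (metis abs_ge_zero increment_bounded power2_abs power_mono)

lemma abs_X_le: "\<bar>X n x\<bar> \<le> C * real n"
  using X_0 increment_bounded by (rule abs_le_of_bounded_increments)

lemma integrable_X_power: "integrable P (\<lambda>x. X n x ^ k)"
  by (rule integrable_const_bound[where B = "(C * real n) ^ k"])
    (simp_all add: power_abs power_mono abs_X_le)

lemma integrable_X_power_increment: "integrable P (\<lambda>x. X n x ^ k * (X (Suc n) x - X n x))"
proof (rule integrable_const_bound[where B = "(C * real n) ^ k * C"])
  show "AE x in P. norm (X n x ^ k * (X (Suc n) x - X n x)) \<le> (C * real n) ^ k * C"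
  proof (rule AE_I2)
    fix x
    show "norm (X n x ^ k * (X (Suc n) x - X n x)) \<le> (C * real n) ^ k * C"
      unfolding real_norm_def abs_mult power_abs
      by (intro mult_mono power_mono abs_X_le increment_bounded) (simp_all add: C_nonneg)
  qed
qed simp

lemma second_moment_le: "(\<integral>x. X n x ^ 2 \<partial>P) \<le> C\<^sup>2 * real n"
proof (induction n)
  case (Suc n)
  let ?D = "\<lambda>x. X (Suc n) x - X n x"
  have "X (Suc n) x ^ 2 \<le> X n x ^ 2 + 2 * (X n x * ?D x) + C\<^sup>2" for x
  proof -
    have "?D x ^ 2 \<le> C\<^sup>2"
      by (rule increment_square_le)
    then show ?thesis
      by (simp add: power2_eq_square algebra_simps)
  qed
  then have "(\<integral>x. X (Suc n) x ^ 2 \<partial>P) \<le> (\<integral>x. X n x ^ 2 + 2 * (X n x * ?D x) + C\<^sup>2 \<partial>P)"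
    using integrable_X_power integrable_X_power_increment[of n 1]
    by (intro integral_mono) auto
  also have "\<dots> = (\<integral>x. X n x ^ 2 \<partial>P) + 2 * (\<integral>x. X n x * ?D x \<partial>P) + C\<^sup>2"
    using integrable_X_power integrable_X_power_increment[of n 1] by (simp add: prob_space)
  also have "\<dots> \<le> C\<^sup>2 * real (Suc n)"
    using Suc increment_orthogonal[of n 1] by (simp add: algebra_simps)
  finally show ?case .
qed (simp add: X_0)

lemma fourth_moment_le: "(\<integral>x. X n x ^ 4 \<partial>P) \<le> 4 * C ^ 4 * (real n)\<^sup>2"
proof (induction n)
  case (Suc n)
  let ?D = "\<lambda>x. X (Suc n) x - X n x"
  have "X (Suc n) x ^ 4 \<le> X n x ^ 4 + 4 * (X n x ^ 3 * ?D x) + 8 * C\<^sup>2 * X n x ^ 2 + 3 * C ^ 4"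
    for x
  proof -
    have D2: "?D x ^ 2 \<le> C\<^sup>2"
      by (rule increment_square_le)
    then have "?D x ^ 4 \<le> C ^ 4"
      using power_mono[OF D2, of 2] by (simp flip: power_mult)
    moreover have "X n x ^ 2 * ?D x ^ 2 \<le> X n x ^ 2 * C\<^sup>2"
      using D2 by (simp add: mult_left_mono)
    ultimately show ?thesis
      using four_power_add_le[of "X n x" "?D x"] by (simp add: algebra_simps)
  qed
  then have "(\<integral>x. X (Suc n) x ^ 4 \<partial>P)
      \<le> (\<integral>x. X n x ^ 4 + 4 * (X n x ^ 3 * ?D x) + 8 * C\<^sup>2 * X n x ^ 2 + 3 * C ^ 4 \<partial>P)"
    using integrable_X_power integrable_X_power_increment[of n 3]
    by (intro integral_mono) auto
  also have "\<dots> = (\<integral>x. X n x ^ 4 \<partial>P) + 4 * (\<integral>x. X n x ^ 3 * ?D x \<partial>P)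
      + 8 * C\<^sup>2 * (\<integral>x. X n x ^ 2 \<partial>P) + 3 * C ^ 4"
    using integrable_X_power integrable_X_power_increment[of n 3] by (simp add: prob_space)
  also have "\<dots> \<le> 4 * C ^ 4 * (real n)\<^sup>2 + 8 * C\<^sup>2 * (C\<^sup>2 * real n) + 3 * C ^ 4"
    using Suc second_moment_le[of n] increment_orthogonal[of n 3]
    by (intro add_mono mult_left_mono) auto
  also have "\<dots> \<le> 4 * C ^ 4 * (real (Suc n))\<^sup>2"
    using zero_le_power[OF C_nonneg, of 4] by (simp add: power2_eq_square power4_eq_xxxx algebra_simps)
  finally show ?case .
qed (simp add: X_0)

lemma AE_LIMSEQ_X_div_zero: "AE x in P. (\<lambda>n. X n x / real n) \<longlonglongrightarrow> 0"
  by (rule AE_LIMSEQ_div_zero_of_fourth_moment[OF X_measurable integrable_X_power fourth_moment_le])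

end

definition unif_01 :: "real measure" where
  "unif_01 = uniform_measure lborel {0..1}"

lemma prob_space_unif_01: "prob_space unif_01"
  unfolding unif_01_def by (rule prob_space_uniform_measure) auto

lemma sets_unif_01 [simp, measurable_cong]: "sets unif_01 = sets borel"
  unfolding unif_01_def by simp

interpretation U: sequence_space unif_01
  unfolding sequence_space_def product_prob_space_def product_sigma_finite_def
  using prob_space_unif_01
  by (auto simp: prob_space_imp_sigma_finite product_prob_space_axioms_def)

lemma unif_seq_space_eq: "unif_seq_space = U.S"
  unfolding unif_seq_space_def unif_01_def by simp

lemma integral_unif_01_step:
  fixes x y :: real
  assumes "0 \<le> c" "c \<le> 1"
  shows "(\<integral>u. (if u < c then x else y) \<partial>unif_01) = c * x + (1 - c) * y"
proof -
  have "{0..1} \<inter> {..<c} = {0..<c}"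
    using assms by auto
  then have "measure unif_01 {..<c} = c"
    using assms unfolding unif_01_def by (subst measure_uniform_measure) auto
  have "(\<lambda>u. if u < c then x else y) = (\<lambda>u. y + (x - y) * indicator {..<c} u)"
    by (auto simp: indicator_def)
  then have "(\<integral>u. (if u < c then x else y) \<partial>unif_01) = (\<integral>u. y + (x - y) * indicator {..<c} u \<partial>unif_01)"
    by simp
  also have "\<dots> = y + (x - y) * measure unif_01 {..<c}"
    by (subst Bochner_Integration.integral_add)
      (auto simp: U.M.prob_space intro: U.M.integrable_const_bound[where B = 1])
  finally show ?thesis
    using \<open>measure unif_01 {..<c} = c\<close> by (simp add: algebra_simps)
qed

lemma (in sequence_space) integral_comb_seq:
  fixes f :: "(nat \<Rightarrow> 'a) \<Rightarrow> real"
  assumes [measurable]: "f \<in> borel_measurable S"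
    and "integrable (S \<Otimes>\<^sub>M S) (\<lambda>(\<omega>, \<omega>'). f (comb_seq n \<omega> \<omega>'))"
  shows "(\<integral>\<omega>. f \<omega> \<partial>S) = (\<integral>\<omega>. (\<integral>\<omega>'. f (comb_seq n \<omega> \<omega>') \<partial>S) \<partial>S)"
proof -
  interpret SS: pair_prob_space S S
    by (simp add: pair_prob_space_def pair_sigma_finite_def prob_space_axioms
        prob_space_imp_sigma_finite)
  have "(\<integral>\<omega>. f \<omega> \<partial>S) = (\<integral>x. f (case x of (\<omega>, \<omega>') \<Rightarrow> comb_seq n \<omega> \<omega>') \<partial>(S \<Otimes>\<^sub>M S))"
    by (subst (1) PiM_comb_seq[symmetric, of n]) (rule integral_distr; measurable)
  also have "\<dots> = (\<integral>\<omega>. (\<integral>\<omega>'. f (comb_seq n \<omega> \<omega>') \<partial>S) \<partial>S)"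
    using SS.integral_fst'[OF assms(2)] by (simp add: split_beta')
  finally show ?thesis .
qed

text \<open>Splitting a sequence at time \<open>n\<close> with \<^const>\<open>comb_seq\<close> keeps the past and makes
  coordinate \<open>n\<close> the first coordinate of an independent uniform sequence.\<close>

lemma integral_prefix_times_fresh_coordinate:
  fixes G :: "(nat \<Rightarrow> real) \<Rightarrow> real" and W :: "(nat \<Rightarrow> real) \<Rightarrow> int"
    and \<Phi> :: "int \<Rightarrow> real \<Rightarrow> real"
  assumes [measurable]: "G \<in> borel_measurable U.S" "W \<in> U.S \<rightarrow>\<^sub>M count_space UNIV"
    "\<And>s. \<Phi> s \<in> borel_measurable borel"
    and G_prefix: "\<And>\<omega> \<omega>'. G (comb_seq n \<omega> \<omega>') = G \<omega>"
    and W_prefix: "\<And>\<omega> \<omega>'. W (comb_seq n \<omega> \<omega>') = W \<omega>"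
    and G_bounded: "\<And>\<omega>. \<bar>G \<omega>\<bar> \<le> B"
    and \<Phi>_bounded: "\<And>s u. \<bar>\<Phi> s u\<bar> \<le> C"
    and \<Phi>_centred: "\<And>s. (\<integral>u. \<Phi> s u \<partial>unif_01) = 0"
  shows "(\<integral>\<omega>. G \<omega> * \<Phi> (W \<omega>) (\<omega> n) \<partial>U.S) = 0"
proof -
  interpret UU: pair_prob_space U.S U.S
    by (simp add: pair_prob_space_def pair_sigma_finite_def U.prob_space_axioms
        prob_space_imp_sigma_finite)
  define f where "f \<omega> = G \<omega> * \<Phi> (W \<omega>) (\<omega> n)" for \<omega>
  have "(\<lambda>\<omega>. \<Phi> (W \<omega>) (\<omega> n)) \<in> borel_measurable U.S"
    by (rule measurable_compose_countable[where g = W]) measurable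
  then have [measurable]: "f \<in> borel_measurable U.S"
    unfolding f_def by measurable
  have f_split: "f (comb_seq n \<omega> \<omega>') = G \<omega> * \<Phi> (W \<omega>) (\<omega>' 0)" for \<omega> \<omega>'
    using comb_seq_add[of n \<omega> \<omega>' 0] by (simp add: f_def G_prefix W_prefix)
  have "integrable (U.S \<Otimes>\<^sub>M U.S) (\<lambda>(\<omega>, \<omega>'). f (comb_seq n \<omega> \<omega>'))"
  proof (rule UU.integrable_const_bound[where B = "B * C"])
    show "AE x in U.S \<Otimes>\<^sub>M U.S. norm ((\<lambda>(\<omega>, \<omega>'). f (comb_seq n \<omega> \<omega>')) x) \<le> B * C"
      unfolding f_split split_beta real_norm_def abs_mult
      by (intro AE_I2 mult_mono G_bounded \<Phi>_bounded) (auto intro: order.trans[OF abs_ge_zero G_bounded])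
  qed measurable
  then have "(\<integral>\<omega>. f \<omega> \<partial>U.S) = (\<integral>\<omega>. G \<omega> * (\<integral>\<omega>'. \<Phi> (W \<omega>) (\<omega>' 0) \<partial>U.S) \<partial>U.S)"
    by (simp add: U.integral_comb_seq[where n = n] f_split)
  also have "\<dots> = 0"
  proof -
    have "(\<integral>\<omega>'. \<Phi> s (\<omega>' 0) \<partial>U.S) = (\<integral>u. \<Phi> s u \<partial>distr U.S unif_01 (\<lambda>\<omega>. \<omega> 0))" for s
      by (rule integral_distr[symmetric]) measurable
    moreover have "distr U.S unif_01 (\<lambda>\<omega>. \<omega> 0) = unif_01"
      by (rule distr_PiM_component) (simp_all add: prob_space_unif_01)
    ultimately show ?thesis
      by (simp add: \<Phi>_centred)
  qed
  finally show ?thesis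
    unfolding f_def .
qed

lemma measurable_parrondo_walk [measurable]:
  "(\<lambda>\<omega>. parrondo_walk m a a' \<omega> n) \<in> U.S \<rightarrow>\<^sub>M count_space UNIV"
proof (induction n)
  case (Suc n)
  have "(\<lambda>\<omega>. (\<lambda>s \<omega>. s + (if \<omega> n < parrondo_prob m a a' s then 1 else -1))
      (parrondo_walk m a a' \<omega> n) \<omega>) \<in> U.S \<rightarrow>\<^sub>M count_space UNIV"
    by (rule measurable_compose_countable[OF _ Suc]) measurable
  then show ?case
    by simp
qed simp

lemma parrondo_walk_cong_prefix:
  "(\<And>i. i < n \<Longrightarrow> \<omega> i = \<omega>' i) \<Longrightarrow> parrondo_walk m a a' \<omega> n = parrondo_walk m a a' \<omega>' n"
  by (induction n) auto

lemma parrondo_walk_comb_seq: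
  "parrondo_walk m a a' (comb_seq n \<omega> \<omega>') n = parrondo_walk m a a' \<omega> n"
  by (rule parrondo_walk_cong_prefix) (simp add: comb_seq_less)

lemma parrondo_prob_mod: "parrondo_prob m a a' (s mod int m) = parrondo_prob m a a' s"
  by (simp add: parrondo_prob_def dvd_mod_iff)

lemma parrondo_prob_bounds:
  assumes "a \<in> {0..1}" "a' \<in> {0..1}"
  shows "0 \<le> parrondo_prob m a a' s" "parrondo_prob m a a' s \<le> 1"
  using assms by (simp_all add: parrondo_prob_def)

definition poisson_equation :: "nat \<Rightarrow> real \<Rightarrow> real \<Rightarrow> (int \<Rightarrow> real) \<Rightarrow> real \<Rightarrow> int \<Rightarrow> bool"
  where "poisson_equation m a a' h \<mu> s \<longleftrightarrow>
    parrondo_prob m a a' s * (1 + h (s + 1) - h s - \<mu>)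
      + (1 - parrondo_prob m a a' s) * (-1 + h (s - 1) - h s - \<mu>) = 0"

definition compensated_walk ::
    "nat \<Rightarrow> real \<Rightarrow> real \<Rightarrow> (int \<Rightarrow> real) \<Rightarrow> real \<Rightarrow> nat \<Rightarrow> (nat \<Rightarrow> real) \<Rightarrow> real"
  where "compensated_walk m a a' h \<mu> n \<omega> =
    real_of_int (parrondo_walk m a a' \<omega> n) + h (parrondo_walk m a a' \<omega> n) - h 0 - \<mu> * real n"

definition compensated_step :: "nat \<Rightarrow> real \<Rightarrow> real \<Rightarrow> (int \<Rightarrow> real) \<Rightarrow> real \<Rightarrow> int \<Rightarrow> real \<Rightarrow> real"
  where "compensated_step m a a' h \<mu> s u =
    (if u < parrondo_prob m a a' s then 1 + h (s + 1) - h s - \<mu> else -1 + h (s - 1) - h s - \<mu>)"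

lemma measurable_compensated_step [measurable]:
  "compensated_step m a a' h \<mu> s \<in> borel_measurable borel"
  unfolding compensated_step_def by measurable

lemma compensated_walk_Suc:
  "compensated_walk m a a' h \<mu> (Suc n) \<omega> - compensated_walk m a a' h \<mu> n \<omega>
    = compensated_step m a a' h \<mu> (parrondo_walk m a a' \<omega> n) (\<omega> n)"
  by (simp add: compensated_walk_def compensated_step_def algebra_simps)

lemma measurable_compensated_walk [measurable]:
  "compensated_walk m a a' h \<mu> n \<in> borel_measurable U.S"
proof -
  have "(\<lambda>\<omega>. (\<lambda>s \<omega>. real_of_int s + h s - h 0 - \<mu> * real n) (parrondo_walk m a a' \<omega> n) \<omega>)
      \<in> borel_measurable U.S"
    by (rule measurable_compose_countable[OF _ measurable_parrondo_walk]) measurable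
  then show ?thesis
    unfolding compensated_walk_def[abs_def] by simp
qed

lemma compensated_walk_comb_seq:
  "compensated_walk m a a' h \<mu> n (comb_seq n \<omega> \<omega>') = compensated_walk m a a' h \<mu> n \<omega>"
  by (simp add: compensated_walk_def parrondo_walk_comb_seq)

lemma abs_compensated_step_le:
  assumes "\<And>s. \<bar>h s\<bar> \<le> B"
  shows "\<bar>compensated_step m a a' h \<mu> s u\<bar> \<le> 1 + 2 * B + \<bar>\<mu>\<bar>"
  using assms[of s] assms[of "s + 1"] assms[of "s - 1"]
  by (auto simp: compensated_step_def abs_le_iff)

lemma integral_compensated_step:
  assumes "a \<in> {0..1}" "a' \<in> {0..1}" and "poisson_equation m a a' h \<mu> s"
  shows "(\<integral>u. compensated_step m a a' h \<mu> s u \<partial>unif_01) = 0"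
  using assms unfolding compensated_step_def poisson_equation_def
  by (simp add: integral_unif_01_step parrondo_prob_bounds)

lemma bounded_orthogonal_increments_compensated_walk:
  assumes "a \<in> {0..1}" "a' \<in> {0..1}" and h_bounded: "\<And>s. \<bar>h s\<bar> \<le> B"
    and poisson: "\<And>s. poisson_equation m a a' h \<mu> s"
  shows "bounded_orthogonal_increments U.S (compensated_walk m a a' h \<mu>) (1 + 2 * B + \<bar>\<mu>\<bar>)"
proof (unfold_locales; (unfold compensated_walk_Suc)?)
  fix n :: nat and \<omega> :: "nat \<Rightarrow> real"
  show "\<bar>compensated_step m a a' h \<mu> (parrondo_walk m a a' \<omega> n) (\<omega> n)\<bar> \<le> 1 + 2 * B + \<bar>\<mu>\<bar>"
    by (rule abs_compensated_step_le[OF h_bounded])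
next
  fix n k :: nat
  let ?C = "1 + 2 * B + \<bar>\<mu>\<bar>"
  have "\<bar>compensated_walk m a a' h \<mu> n \<omega>\<bar> \<le> ?C * real n" for \<omega>
  proof (rule abs_le_of_bounded_increments)
    show "\<bar>compensated_walk m a a' h \<mu> (Suc j) \<omega> - compensated_walk m a a' h \<mu> j \<omega>\<bar> \<le> ?C" for j
      unfolding compensated_walk_Suc by (rule abs_compensated_step_le[OF h_bounded])
  qed (simp add: compensated_walk_def)
  then show "(\<integral>\<omega>. compensated_walk m a a' h \<mu> n \<omega> ^ k
      * compensated_step m a a' h \<mu> (parrondo_walk m a a' \<omega> n) (\<omega> n) \<partial>U.S) = 0"
    by (intro integral_prefix_times_fresh_coordinate[where B = "(?C * real n) ^ k" and C = ?C])
      (auto simp: compensated_walk_comb_seq parrondo_walk_comb_seq power_abs power_mono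
        abs_compensated_step_le[OF h_bounded] integral_compensated_step[OF assms(1,2) poisson])
qed (simp_all add: compensated_walk_def)

lemma parrondo_walk_LIMSEQ:
  assumes "a \<in> {0..1}" "a' \<in> {0..1}" and h_bounded: "\<And>s. \<bar>h s\<bar> \<le> B"
    and "\<And>s. poisson_equation m a a' h \<mu> s"
  shows "AE \<omega> in unif_seq_space. (\<lambda>n. real_of_int (parrondo_walk m a a' \<omega> n) / real n) \<longlonglongrightarrow> \<mu>"
proof -
  interpret bounded_orthogonal_increments U.S "compensated_walk m a a' h \<mu>" "1 + 2 * B + \<bar>\<mu>\<bar>"
    using bounded_orthogonal_increments_compensated_walk[OF assms] .
  show ?thesis
    unfolding unif_seq_space_eq using AE_LIMSEQ_X_div_zero
  proof (elim AE_mp, intro AE_I2 impI)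
    fix \<omega>
    let ?S = "\<lambda>n. parrondo_walk m a a' \<omega> n"
    assume "(\<lambda>n. compensated_walk m a a' h \<mu> n \<omega> / real n) \<longlonglongrightarrow> 0"
    moreover have "(\<lambda>n. (h (?S n) - h 0) / real n) \<longlonglongrightarrow> 0"
    proof (rule Lim_null_comparison)
      show "\<forall>\<^sub>F n in sequentially. norm ((h (?S n) - h 0) / real n) \<le> 2 * B / real n"
      proof (intro always_eventually allI)
        fix n
        have "\<bar>h (?S n) - h 0\<bar> \<le> 2 * B"
          using h_bounded[of "?S n"] h_bounded[of 0] by (simp add: abs_le_iff)
        then show "norm ((h (?S n) - h 0) / real n) \<le> 2 * B / real n"
          by (simp add: divide_right_mono)
      qed
    qed (rule lim_const_over_n)
    ultimately have "(\<lambda>n. compensated_walk m a a' h \<mu> n \<omega> / real n + \<mu> - (h (?S n) - h 0) / real n)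
        \<longlonglongrightarrow> 0 + \<mu> - 0"
      by (intro tendsto_intros)
    moreover have "\<forall>\<^sub>F n in sequentially. compensated_walk m a a' h \<mu> n \<omega> / real n + \<mu>
        - (h (?S n) - h 0) / real n = real_of_int (?S n) / real n"
      using eventually_gt_at_top[of "0::nat"]
      by (elim eventually_mono) (simp add: compensated_walk_def field_simps)
    ultimately show "(\<lambda>n. real_of_int (?S n) / real n) \<longlonglongrightarrow> \<mu>"
      by (simp add: Lim_transform_eventually)
  qed
qed

lemma poisson_equation_periodic:
  "poisson_equation m a a' (\<lambda>s. H (s mod int m)) \<mu> s
    \<longleftrightarrow> poisson_equation m a a' (\<lambda>s. H (s mod int m)) \<mu> (s mod int m)"
  by (simp add: poisson_equation_def parrondo_prob_mod mod_add_left_eq mod_diff_left_eq)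

lemma parrondo_walk_LIMSEQ_periodic:
  assumes "a \<in> {0..1}" "a' \<in> {0..1}" "0 < m"
    and poisson: "\<And>r. 0 \<le> r \<Longrightarrow> r < int m \<Longrightarrow> poisson_equation m a a' (\<lambda>s. H (s mod int m)) \<mu> r"
  shows "AE \<omega> in unif_seq_space. (\<lambda>n. real_of_int (parrondo_walk m a a' \<omega> n) / real n) \<longlonglongrightarrow> \<mu>"
proof (rule parrondo_walk_LIMSEQ[where B = "\<Sum>r\<in>{0..<int m}. \<bar>H r\<bar>"])
  show "\<bar>H (s mod int m)\<bar> \<le> (\<Sum>r\<in>{0..<int m}. \<bar>H r\<bar>)" for s
    using \<open>0 < m\<close> by (intro member_le_sum) auto
  show "poisson_equation m a a' (\<lambda>s. H (s mod int m)) \<mu> s" for s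
    using \<open>0 < m\<close> by (subst poisson_equation_periodic) (simp add: poisson)
qed (use assms in auto)

text \<open>The Poisson equation for \<open>m = 3\<close> with corrector values \<open>0, x\<^sub>1, x\<^sub>2\<close> on the
  residues \<open>0, 1, 2\<close>.\<close>

lemma parrondo3_walk_LIMSEQ:
  fixes x\<^sub>1 x\<^sub>2 :: real
  assumes "a \<in> {0..1}" "a' \<in> {0..1}"
    and "a' * (1 + x\<^sub>1 - \<mu>) + (1 - a') * (-1 + x\<^sub>2 - \<mu>) = 0"
    and "a * (1 + x\<^sub>2 - x\<^sub>1 - \<mu>) + (1 - a) * (-1 - x\<^sub>1 - \<mu>) = 0"
    and "a * (1 - x\<^sub>2 - \<mu>) + (1 - a) * (-1 + x\<^sub>1 - x\<^sub>2 - \<mu>) = 0"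
  shows "AE \<omega> in unif_seq_space. (\<lambda>n. real_of_int (parrondo_walk 3 a a' \<omega> n) / real n) \<longlonglongrightarrow> \<mu>"
proof -
  define H where "H r = (if r = 1 then x\<^sub>1 else if r = 2 then x\<^sub>2 else 0)" for r :: int
  have "poisson_equation 3 a a' (\<lambda>s. H (s mod int 3)) \<mu> r" if "0 \<le> r" "r < int 3" for r
  proof -
    from that have "r = 0 \<or> r = 1 \<or> r = 2"
      by auto
    then show ?thesis
      using assms by (auto simp: H_def poisson_equation_def parrondo_prob_def)
  qed
  then show ?thesis
    using assms by (intro parrondo_walk_LIMSEQ_periodic[where H = H]) auto
qed

lemma losing_gameI:
  assumes "AE \<omega> in unif_seq_space. (\<lambda>n. real_of_int (parrondo_walk m a a' \<omega> n) / real n) \<longlonglongrightarrow> \<mu>"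
    and "\<mu> < 0"
  shows "losing_game m a a'"
  unfolding losing_game_def using assms(1) by (rule eventually_mono) (use assms(2) in auto)

lemma winning_gameI:
  assumes "AE \<omega> in unif_seq_space. (\<lambda>n. real_of_int (parrondo_walk m a a' \<omega> n) / real n) \<longlonglongrightarrow> \<mu>"
    and "0 < \<mu>"
  shows "winning_game m a a'"
  unfolding winning_game_def using assms(1) by (rule eventually_mono) (use assms(2) in auto)

theorem corollary4p2:
  shows "\<exists>(m::nat) (\<beta>::real) (\<beta>'::real) (p::real) (p'::real) (\<pi>::real).
     m \<ge> 3 \<and> \<beta> \<in> {0..1} \<and> \<beta>' \<in> {0..1} \<and> p \<in> {0..1} \<and> p' \<in> {0..1} \<and>
     \<pi> \<in> {0<..<1} \<and>
     losing_game m \<beta> \<beta>' \<and> losing_game m p p' \<and>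
     winning_game m (\<pi> * p + (1 - \<pi>) * \<beta>) (\<pi> * p' + (1 - \<pi>) * \<beta>')"
proof -
  have \<beta>_losing: "losing_game 3 (49/100) (49/100)"
    by (rule losing_gameI[OF parrondo3_walk_LIMSEQ[where x\<^sub>1 = 0 and x\<^sub>2 = 0 and \<mu> = "-1/50"]])
      simp_all
  have p_losing: "losing_game 3 (37/50) (9/100)"
    by (rule losing_gameI[OF parrondo3_walk_LIMSEQ[where x\<^sub>1 = "1885/1759" and x\<^sub>2 = "1365/1759"
          and \<mu> = "-1529/87950"]]) simp_all
  have mixture_winning: "winning_game 3 (123/200) (29/100)"
    by (rule winning_gameI[OF parrondo3_walk_LIMSEQ[where x\<^sub>1 = "2210/4663" and x\<^sub>2 = "36010/88597"
          and \<mu> = "26673/4429850"]]) simp_all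
  show ?thesis
    by (rule exI[of _ 3], rule exI[of _ "49/100"], rule exI[of _ "49/100"], rule exI[of _ "37/50"],
        rule exI[of _ "9/100"], rule exI[of _ "1/2"]) (simp add: \<beta>_losing p_losing mixture_winning)
qed

end
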